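(* Let $n\ge1$ and let $A$ be a set with an $(n+1)$-ary operation $\theta$, binary operations $\alpha_1,\dots,\alpha_n$ and elements $e_1,\dots,e_n$ such that $\alpha_i(a,a)=e_i$ and $\theta(\alpha_1(a,b),\dots,\alpha_n(a,b),b)=a$ for all $a,b\in A$. The following conditions are equivalent: (i) for every $b\in A$ the map $\theta_b:A^n\to A$, $\theta_b(x_1,\dots,x_n)=\theta(x_1,\dots,x_n,b)$, is a bijection; (ii) for all $a,b\in A$, the equation $\theta(x_1,\dots,x_n,b)=a$ in the unknowns $x_1,\dots,x_n$ has a unique solution; (iii) for all $b,a_1,\dots,a_n\in A$, the system of equations $\alpha_i(x,b)=a_i$ $(1\le i\le n)$ in one unknown $x$ has a (unique) solution; (iv) for all $a_1,\dots,a_n,b\in A$ and every $i$ with $1\le i\le n$, $\alpha_i(\theta(a_1,\dots,a_n,b),b)=a_i$.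
   Context: The setting is that of an algebra $A$ in a protomodular variety, with $\theta,\alpha_i,e_i$ the operations and constants witnessing protomodularity as described in the claim. *)

theory Defs
  imports Main
begin

end

theory Submission
  imports Defs
begin

text \<open>
  For fixed \<open>b\<close>, the map \<open>s\<^sub>b(a) = (\<alpha>\<^sub>1(a,b), \<dots>, \<alpha>\<^sub>n(a,b))\<close> is a right
  inverse of \<open>\<theta>\<^sub>b\<close>. Hence \<open>\<theta>\<^sub>b\<close> is onto, and each of (i)--(iv) amounts to
  \<open>s\<^sub>b\<close> being onto \<open>A\<^sup>n\<close>, i.e. to \<open>s\<^sub>b\<close> being a two-sided inverse of \<open>\<theta>\<^sub>b\<close>.
\<close>

lemma bij_betw_UNIV_iff_ex1:
  "bij_betw f X UNIV \<longleftrightarrow> (\<forall>y. \<exists>!x. x \<in> X \<and> f x = y)"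
proof
  assume bij: "bij_betw f X UNIV"
  show "\<forall>y. \<exists>!x. x \<in> X \<and> f x = y"
  proof
    fix y
    have "y \<in> f ` X" and inj: "inj_on f X"
      using bij by (simp_all add: bij_betw_def)
    then obtain x where "x \<in> X" "f x = y" by blast
    with inj show "\<exists>!x. x \<in> X \<and> f x = y" by (auto dest: inj_onD)
  qed
next
  assume unique: "\<forall>y. \<exists>!x. x \<in> X \<and> f x = y"
  then have "inj_on f X"
    by (auto intro: inj_onI)
  moreover have "y \<in> f ` X" for y
    using unique by (metis image_eqI)
  ultimately show "bij_betw f X UNIV"
    by (auto simp: bij_betw_def)
qed

lemma
  assumes section_in: "\<And>a. s a \<in> X"
    and retraction: "\<And>a. t (s a) = a"
  shows ex1_preimage_iff_subset_range_section:
      "(\<forall>a. \<exists>!x. x \<in> X \<and> t x = a) \<longleftrightarrow> X \<subseteq> range s"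
    and subset_range_section_iff_inverse:
      "X \<subseteq> range s \<longleftrightarrow> (\<forall>x\<in>X. s (t x) = x)"
proof -
  show "(\<forall>a. \<exists>!x. x \<in> X \<and> t x = a) \<longleftrightarrow> X \<subseteq> range s"
  proof
    assume unique: "\<forall>a. \<exists>!x. x \<in> X \<and> t x = a"
    show "X \<subseteq> range s"
    proof
      fix x assume "x \<in> X"
      with unique section_in retraction have "x = s (t x)" by blast
      then show "x \<in> range s" by blast
    qed
  next
    assume "X \<subseteq> range s"
    then have "x = s a" if "x \<in> X" "t x = a" for x a
      using that retraction by auto
    with section_in retraction show "\<forall>a. \<exists>!x. x \<in> X \<and> t x = a" by blast
  qed
  show "X \<subseteq> range s \<longleftrightarrow> (\<forall>x\<in>X. s (t x) = x)"
    using retraction by (auto intro: range_eqI[of _ s "t _", OF sym])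
qed

lemma map_upt_Suc_eq_iff_nth:
  assumes "length xs = n"
  shows "map g [1..<n+1] = xs \<longleftrightarrow> (\<forall>i\<in>{1..n}. g i = xs ! (i - 1))"
proof
  assume "map g [1..<n+1] = xs"
  then show "\<forall>i\<in>{1..n}. g i = xs ! (i - 1)"
    by (auto simp: nth_map_upt simp del: upt_Suc)
next
  assume nth: "\<forall>i\<in>{1..n}. g i = xs ! (i - 1)"
  show "map g [1..<n+1] = xs"
  proof (rule nth_equalityI)
    fix j assume "j < length (map g [1..<n+1])"
    then show "map g [1..<n+1] ! j = xs ! j"
      using nth[rule_format, of "j + 1"] by (simp add: nth_map_upt del: upt_Suc)
  qed (simp add: assms)
qed

theorem lemma3p12:
  fixes n :: nat
    and theta :: "'a list \<Rightarrow> 'a \<Rightarrow> 'a"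
    and alpha :: "nat \<Rightarrow> 'a \<Rightarrow> 'a \<Rightarrow> 'a"
    and e :: "nat \<Rightarrow> 'a"
  assumes "n \<ge> 1"
    and "\<And>i a. i \<in> {1..n} \<Longrightarrow> alpha i a a = e i"
    and "\<And>a b. theta (map (\<lambda>i. alpha i a b) [1..<n+1]) b = a"
  shows "((\<forall>b. bij_betw (\<lambda>xs. theta xs b) {xs. length xs = n} UNIV)
          \<longleftrightarrow> (\<forall>a b. \<exists>!xs. length xs = n \<and> theta xs b = a))
       \<and> ((\<forall>a b. \<exists>!xs. length xs = n \<and> theta xs b = a)
          \<longleftrightarrow> (\<forall>b as. length as = n \<longrightarrow>
                 (\<exists>x. \<forall>i\<in>{1..n}. alpha i x b = as ! (i - 1))))
       \<and> ((\<forall>b as. length as = n \<longrightarrow>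
                 (\<exists>x. \<forall>i\<in>{1..n}. alpha i x b = as ! (i - 1)))
          \<longleftrightarrow> (\<forall>as b. length as = n \<longrightarrow>
                 (\<forall>i\<in>{1..n}. alpha i (theta as b) b = as ! (i - 1))))"
proof -
  define s where "s b a = map (\<lambda>i. alpha i a b) [1..<n+1]" for b a
  define X where "X = {xs :: 'a list. length xs = n}"
  have section_in: "s b a \<in> X" for a b
    by (simp add: s_def X_def)
  have retraction: "theta (s b a) b = a" for a b
    using assms(3) by (simp add: s_def)
  have s_eq_iff: "s b x = as \<longleftrightarrow> (\<forall>i\<in>{1..n}. alpha i x b = as ! (i - 1))"
    if "length as = n" for b x as
    unfolding s_def using that by (rule map_upt_Suc_eq_iff_nth)
  have bij_iff: "bij_betw (\<lambda>xs. theta xs b) X UNIV \<longleftrightarrow> X \<subseteq> range (s b)" for b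
    unfolding bij_betw_UNIV_iff_ex1
    by (rule ex1_preimage_iff_subset_range_section[OF section_in[of b] retraction[of b]])
  have unique_solution_iff: "(\<forall>a. \<exists>!xs. length xs = n \<and> theta xs b = a) \<longleftrightarrow> X \<subseteq> range (s b)" for b
    using ex1_preimage_iff_subset_range_section[OF section_in[of b] retraction[of b]]
    by (simp add: X_def)
  have system_solvable_iff: "(\<forall>as. length as = n \<longrightarrow> (\<exists>x. \<forall>i\<in>{1..n}. alpha i x b = as ! (i - 1)))
      \<longleftrightarrow> X \<subseteq> range (s b)" for b
  proof -
    have "X \<subseteq> range (s b) \<longleftrightarrow> (\<forall>as. length as = n \<longrightarrow> (\<exists>x. s b x = as))"
      unfolding X_def by blast
    then show ?thesis by (simp add: s_eq_iff)
  qed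
  have alpha_theta_iff: "(\<forall>as. length as = n \<longrightarrow> (\<forall>i\<in>{1..n}. alpha i (theta as b) b = as ! (i - 1)))
      \<longleftrightarrow> X \<subseteq> range (s b)" for b
    using subset_range_section_iff_inverse[OF section_in[of b] retraction[of b]]
    by (simp add: X_def s_eq_iff)
  show ?thesis
    unfolding X_def[symmetric] bij_iff all_comm[of "\<lambda>a b. \<exists>!xs. length xs = n \<and> theta xs b = a"]
      all_comm[of "\<lambda>as b. length as = n \<longrightarrow> _ as b"]
      unique_solution_iff system_solvable_iff alpha_theta_iff
    by simp
qed

end
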